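(* Let $(\mathbf f,\mathbf g)$ be a vector admissible system, $\epsilon\in\mathcal E$, $w\in\mathbb N$, $i_0=\lfloor (w-1)/2\rfloor$, and $L\in\mathbb N$ with $L\ge i_0$. Let $\mathbf X\in\mathcal X^{2L+w}$ with rows $\mathbf x_{-L},\dots,\mathbf x_{L+w-1}$ satisfy $\mathbf x_i=\mathbf x_{i_0}$ for all $i>i_0$. Then $$U(\mathbf S\mathbf X;\epsilon)-U(\mathbf X;\epsilon)\le -U(\mathbf x_{i_0};\epsilon),$$ where on the left $U$ is the coupled-system potential and on the right $U$ is the single-system potential.
   Context: Let $d\in\mathbb N$, $\mathcal X=[0,1]^d$, $\mathcal E=[0,1]$, $\mathcal X^\circ=\mathcal X\setminus\{\mathbf 0\}$; vectors are row vectors and $\mathbf x\preceq\mathbf y$ means $x_i\le y_i$ for all $i$. Let $\mathbf D$ be a $d\times d$ positive diagonal matrix, $\mathbf f:\mathcal X\times\mathcal E\to\mathcal X$, $\mathbf g:\mathcal X\to\mathcal X$, and $F,G$ scalar functionals with $\nabla_{\mathbf x}F(\mathbf x;\epsilon)=\mathbf f(\mathbf x;\epsilon)\mathbf D$, $\nabla G(\mathbf x)=\mathbf g(\mathbf x)\mathbf D$, $F(\mathbf 0;\epsilon)=G(\mathbf 0)=0$. $(\mathbf f,\mathbf g)$ is a vector admissible system if: (i) $\mathbf f,\mathbf g$ are $C^2$; (ii) $\mathbf f(\mathbf x;\epsilon)$, $\mathbf g(\mathbf x)$ are non-decreasing in $\mathbf x$ w.r.t. $\preceq$; (iii) for $\mathbf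 x\in\mathcal X^\circ$, $\epsilon_1<\epsilon_2$ implies $\mathbf f(\mathbf x;\epsilon_1)\preceq\mathbf f(\mathbf x;\epsilon_2)$ and $\mathbf f(\mathbf x;\epsilon_1)\ne\mathbf f(\mathbf x;\epsilon_2)$; (iv) $\mathbf f(\mathbf 0;\epsilon)=\mathbf f(\mathbf x;0)=\mathbf g(\mathbf 0)=\mathbf 0$, $F(\mathbf x;0)=0$. Single-system potential: $U(\mathbf x;\epsilon)=\mathbf g(\mathbf x)\mathbf D\mathbf x^{\mathsf T}-G(\mathbf x)-F(\mathbf g(\mathbf x);\epsilon)$. Matrices $\mathbf X\in\mathcal X^{2L+w}$ have rows $\mathbf x_{-L},\dots,\mathbf x_{L+w-1}$; vector functions act row-wise. $\mathbf A$ is the $(2L+1)\times(2L+w)$ matrix with rows indexed by $j\in\{-L,\dots,L\}$ and columns by $k\in\{-L,\dots,L+w-1\}$, $A_{j,k}=1/w$ if $0\le k-j\le w-1$ and $0$ otherwise. Coupled-system potential: $U(\mathbf X;\epsilon)=\mathrm{Tr}(\mathbf g(\mathbf X)\mathbf D\mathbf X^{\mathsf T})-\sum_{i=-L}^{L+w-1}G(\mathbf x_i)-\sum_{j=-L}^{L}F([\mathbf A\mathbf g(\mathbf X)]_j;\epsilon)$. $\mathbf S$ is the down-shift: $[\mathbf S\mathbf X]_{-L}=\mathbf 0$ and $[\mathbf S\mathbf X]_i=\mathbf x_{i-1}$ for $-L<i\le L+w-1$. *)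

theory Defs
  imports "HOL-Analysis.Analysis"
begin

text \<open>Vectors in [0,1]^d are elements of real^'d (index type 'd finite, d = CARD('d)).
  The order \<le> on real^'d is the componentwise order (the paper's \<preceq>).\<close>

definition Xset :: "(real^'d) set" where
  "Xset = {0..1}"

definition Eset :: "real set" where
  "Eset = {0..1}"

definition C2_on :: "'a::real_normed_vector set \<Rightarrow> ('a \<Rightarrow> 'b::real_normed_vector) \<Rightarrow> bool" where
  "C2_on S h \<longleftrightarrow> (\<exists>(h' :: 'a \<Rightarrow> ('a \<Rightarrow>\<^sub>L 'b)) (h'' :: 'a \<Rightarrow> ('a \<Rightarrow>\<^sub>L ('a \<Rightarrow>\<^sub>L 'b))).
      (\<forall>x\<in>S. (h has_derivative blinfun_apply (h' x)) (at x within S)) \<and>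
      (\<forall>x\<in>S. (h' has_derivative blinfun_apply (h'' x)) (at x within S)) \<and>
      continuous_on S h'')"

definition pos_diag :: "real^'d^'d \<Rightarrow> bool" where
  "pos_diag D \<longleftrightarrow> (\<forall>i j. i \<noteq> j \<longrightarrow> D $ i $ j = 0) \<and> (\<forall>i. D $ i $ i > 0)"

definition vector_admissible ::
  "real^'d^'d \<Rightarrow> (real^'d \<Rightarrow> real \<Rightarrow> real^'d) \<Rightarrow> (real^'d \<Rightarrow> real^'d)
   \<Rightarrow> (real^'d \<Rightarrow> real \<Rightarrow> real) \<Rightarrow> (real^'d \<Rightarrow> real) \<Rightarrow> bool" where
  "vector_admissible D f g F G \<longleftrightarrow>
     pos_diag D \<and>
     (\<forall>x\<in>Xset. \<forall>e\<in>Eset. f x e \<in> Xset) \<and> (\<forall>x\<in>Xset. g x \<in> Xset) \<and>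
     (\<forall>e\<in>Eset. \<forall>x\<in>Xset. ((\<lambda>y. F y e) has_derivative (\<lambda>h. (f x e v* D) \<bullet> h)) (at x within Xset)) \<and>
     (\<forall>x\<in>Xset. (G has_derivative (\<lambda>h. (g x v* D) \<bullet> h)) (at x within Xset)) \<and>
     (\<forall>e\<in>Eset. F 0 e = 0) \<and> G 0 = 0 \<and>
     C2_on (Xset \<times> Eset) (\<lambda>p. f (fst p) (snd p)) \<and> C2_on Xset g \<and>
     (\<forall>e\<in>Eset. \<forall>x\<in>Xset. \<forall>y\<in>Xset. x \<le> y \<longrightarrow> f x e \<le> f y e) \<and>
     (\<forall>x\<in>Xset. \<forall>y\<in>Xset. x \<le> y \<longrightarrow> g x \<le> g y) \<and>
     (\<forall>x\<in>Xset - {0}. \<forall>e1\<in>Eset. \<forall>e2\<in>Eset. e1 < e2 \<longrightarrow> f x e1 \<le> f x e2 \<and> f x e1 \<noteq> f x e2) \<and>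
     (\<forall>e\<in>Eset. f 0 e = 0) \<and> (\<forall>x\<in>Xset. f x 0 = 0) \<and> g 0 = 0 \<and>
     (\<forall>x\<in>Xset. F x 0 = 0)"

definition U_single ::
  "real^'d^'d \<Rightarrow> (real^'d \<Rightarrow> real^'d) \<Rightarrow> (real^'d \<Rightarrow> real \<Rightarrow> real) \<Rightarrow> (real^'d \<Rightarrow> real)
   \<Rightarrow> real^'d \<Rightarrow> real \<Rightarrow> real" where
  "U_single D g F G x e = (g x v* D) \<bullet> x - G x - F (g x) e"

text \<open>Coupled matrices X: rows x_i for i = -L..L+w-1, represented as a function int \<Rightarrow> real^'d
  (values outside the index range are irrelevant).  [A g(X)]_j = (1/w) sum_{k=j}^{j+w-1} g(x_k).\<close>
definition Ag :: "nat \<Rightarrow> (real^'d \<Rightarrow> real^'d) \<Rightarrow> (int \<Rightarrow> real^'d) \<Rightarrow> int \<Rightarrow> real^'d" where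
  "Ag w g X j = (1 / real w) *\<^sub>R (\<Sum>k\<in>{j..j + int w - 1}. g (X k))"

definition U_coupled ::
  "nat \<Rightarrow> nat \<Rightarrow> real^'d^'d \<Rightarrow> (real^'d \<Rightarrow> real^'d) \<Rightarrow> (real^'d \<Rightarrow> real \<Rightarrow> real) \<Rightarrow> (real^'d \<Rightarrow> real)
   \<Rightarrow> (int \<Rightarrow> real^'d) \<Rightarrow> real \<Rightarrow> real" where
  "U_coupled L w D g F G X e =
     (\<Sum>i\<in>{- int L .. int L + int w - 1}. (g (X i) v* D) \<bullet> X i)
     - (\<Sum>i\<in>{- int L .. int L + int w - 1}. G (X i))
     - (\<Sum>j\<in>{- int L .. int L}. F (Ag w g X j) e)"

definition shift_down :: "nat \<Rightarrow> (int \<Rightarrow> real^'d) \<Rightarrow> int \<Rightarrow> real^'d" where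
  "shift_down L X i = (if i = - int L then 0 else X (i - 1))"

end

theory Submission
  imports Defs
begin

(* Write N = L + w - 1 for the last row index and a = -L for the first.
   Shifting the rows down by one inserts the zero row at position a and drops the
   last row x_N.  Since g 0 = 0 and G 0 = 0, the row-wise sums in the coupled
   potential lose exactly the terms of x_N, and since the window averages satisfy
   [A g(SX)]_(j+1) = [A g(X)]_j, the coupling sum gains the new term F([A g(SX)]_a)
   and loses the term F([A g(X)]_L).  This gives the exact identity
     U(SX) - U(X) = F([A g(X)]_L) - F([A g(SX)]_a) - (g(x_N) D x_N^T - G(x_N))
   (lemma U_coupled_shift_down_diff).  Under the hypothesis of the theorem the rows
   from index L on all equal x_(i0), so x_N = x_(i0) and [A g(X)]_L = g(x_(i0));
   moreover F is nonnegative on the unit cube (mean value theorem along the segment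
   from 0, using f >= 0 and D >= 0), so dropping -F([A g(SX)]_a) yields the bound. *)

lemma sum_int_shift1:
  fixes h :: "int \<Rightarrow> 'a::comm_monoid_add"
  shows "sum h {a+1..b+1} = sum (\<lambda>i. h (i+1)) {a..b}"
  by (rule sum.reindex_bij_witness[where j="\<lambda>i. i - 1" and i="\<lambda>i. i+1"]) auto

lemma sum_int_first:
  fixes h :: "int \<Rightarrow> 'a::comm_monoid_add"
  assumes "a \<le> b"
  shows "sum h {a..b} = h a + sum h {a+1..b}"
proof -
  have "{a..b} = insert a {a+1..b}" using assms by auto
  thus ?thesis by simp
qed

lemma sum_int_last:
  fixes h :: "int \<Rightarrow> 'a::comm_monoid_add"
  assumes "a \<le> b"
  shows "sum h {a..b} = sum h {a..b-1} + h b"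
proof -
  have "{a..b} = insert b {a..b-1}" using assms by auto
  thus ?thesis by (simp add: add.commute)
qed

lemma sum_int_shift_window:
  fixes h k :: "int \<Rightarrow> 'a::ab_group_add"
  assumes "a \<le> b" and "\<And>i. a \<le> i \<Longrightarrow> i < b \<Longrightarrow> k (i+1) = h i"
  shows "sum k {a..b} = k a + sum h {a..b} - h b"
proof -
  have "sum k {a..b} = k a + sum k {a+1..(b-1)+1}" using sum_int_first[OF assms(1)] by simp
  also have "sum k {a+1..(b-1)+1} = sum (\<lambda>i. k (i+1)) {a..b-1}" by (rule sum_int_shift1)
  also have "\<dots> = sum h {a..b-1}" using assms(2) by (intro sum.cong) auto
  also have "\<dots> = sum h {a..b} - h b" using sum_int_last[OF assms(1), of h] by simp
  finally show ?thesis by (simp add: algebra_simps)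
qed

lemma Xset_iff: "x \<in> Xset \<longleftrightarrow> (\<forall>i. 0 \<le> x $ i \<and> x $ i \<le> 1)"
  by (auto simp: Xset_def less_eq_vec_def)

lemma zero_in_Xset: "0 \<in> Xset"
  by (simp add: Xset_iff)

lemma pos_diag_vector_matrix_nonneg:
  assumes "pos_diag D" "\<forall>i. 0 \<le> v $ i"
  shows "0 \<le> (v v* D) $ j"
proof -
  have "\<forall>i j. 0 \<le> D $ i $ j" using assms(1) unfolding pos_diag_def
    by (metis order.refl less_imp_le)
  thus ?thesis using assms(2) by (auto simp: vector_matrix_mult_def intro!: sum_nonneg)
qed

lemma inner_nonneg_vec:
  fixes u v :: "real^'d"
  assumes "\<forall>i. 0 \<le> u $ i" "\<forall>i. 0 \<le> v $ i"
  shows "0 \<le> u \<bullet> v"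
  using assms by (auto simp: inner_vec_def intro!: sum_nonneg)

text \<open>F(y) = F(y) - F(0) = (f(t y) D) . y for some t in [0,1] by the mean value theorem,
  and the right-hand side is nonnegative because f takes values in the unit cube.\<close>
lemma F_nonneg:
  assumes adm: "vector_admissible D f g F G" and e: "e \<in> Eset" and y: "y \<in> Xset"
  shows "0 \<le> F y e"
proof -
  have pd: "pos_diag D" and F0: "F 0 e = 0" and fX: "\<forall>x\<in>Xset. f x e \<in> Xset"
    and dF: "\<forall>x\<in>Xset. ((\<lambda>y. F y e) has_derivative (\<lambda>h. (f x e v* D) \<bullet> h)) (at x within Xset)"
    using adm e by (simp_all add: vector_admissible_def)
  have segment: "t *\<^sub>R y \<in> Xset" if "t \<in> {0..1}" for t :: real
    using y that unfolding Xset_iff by (auto simp: mult_le_one)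
  have der: "((\<lambda>t. F (t *\<^sub>R y) e) has_derivative (\<lambda>h. (f (t *\<^sub>R y) e v* D) \<bullet> (h *\<^sub>R y)))
      (at t within {0..1})" if "0 \<le> t" "t \<le> 1" for t :: real
  proof -
    have "((\<lambda>t. t *\<^sub>R y) has_derivative (\<lambda>h. h *\<^sub>R y)) (at t within {0..1})"
      by (auto intro!: derivative_eq_intros)
    moreover have "(\<lambda>t. t *\<^sub>R y) ` {0..1} \<subseteq> Xset" using segment by auto
    ultimately show ?thesis
      using has_derivative_in_compose2[of Xset "\<lambda>y. F y e" "\<lambda>x h. (f x e v* D) \<bullet> h"
          "\<lambda>t. t *\<^sub>R y" "{0..1}" t "\<lambda>h. h *\<^sub>R y"] dF that
      by auto
  qed
  obtain t where t: "t \<in> {0..1}"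
    and eq: "F (1 *\<^sub>R y) e - F (0 *\<^sub>R y) e = (f (t *\<^sub>R y) e v* D) \<bullet> ((1 - 0) *\<^sub>R y)"
    using mvt_very_simple[of 0 1 "\<lambda>t. F (t *\<^sub>R y) e", OF _ der] by auto
  have "f (t *\<^sub>R y) e \<in> Xset" using fX segment t by auto
  hence "0 \<le> (f (t *\<^sub>R y) e v* D) \<bullet> y"
    using y pos_diag_vector_matrix_nonneg[OF pd] by (intro inner_nonneg_vec) (auto simp: Xset_iff)
  thus ?thesis using eq F0 by simp
qed

lemma Ag_in_Xset:
  assumes w: "w \<ge> 1" and window: "\<forall>k\<in>{j..j + int w - 1}. g (X k) \<in> Xset"
  shows "Ag w g X j \<in> Xset"
  unfolding Xset_iff
proof
  fix i
  let ?K = "{j..j + int w - 1}"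
  have c: "0 \<le> g (X k) $ i \<and> g (X k) $ i \<le> 1" if "k \<in> ?K" for k
    using window that by (simp add: Xset_iff)
  have lower: "0 \<le> (\<Sum>k\<in>?K. g (X k) $ i)" using c by (intro sum_nonneg) auto
  have "(\<Sum>k\<in>?K. g (X k) $ i) \<le> (\<Sum>k\<in>?K. 1)" using c by (intro sum_mono) auto
  hence upper: "(\<Sum>k\<in>?K. g (X k) $ i) \<le> real w" by simp
  have "Ag w g X j $ i = (\<Sum>k\<in>?K. g (X k) $ i) / real w"
    by (simp add: Ag_def sum_component)
  thus "0 \<le> Ag w g X j $ i \<and> Ag w g X j $ i \<le> 1"
    using lower upper w by (auto simp: divide_le_eq)
qed

lemma Ag_const_window:
  assumes w: "w \<ge> 1" and const: "\<forall>k\<in>{j..j + int w - 1}. X k = x"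
  shows "Ag w g X j = g x"
proof -
  have "(\<Sum>k\<in>{j..j + int w - 1}. g (X k)) = (\<Sum>k\<in>{j..j + int w - 1}. g x)"
    using const by (intro sum.cong) auto
  also have "\<dots> = real w *\<^sub>R g x" by (simp add: scaleR_conv_of_real)
  finally show ?thesis using w by (simp add: Ag_def)
qed

lemma shift_down_in_Xset:
  assumes "\<forall>i\<in>{- int L .. N}. X i \<in> Xset" and "i \<in> {- int L .. N}"
  shows "shift_down L X i \<in> Xset"
  using assms zero_in_Xset by (auto simp: shift_down_def)

lemma sum_shift_down:
  fixes h :: "real^'d \<Rightarrow> 'a::ab_group_add"
  assumes "h 0 = 0" and "- int L \<le> N"
  shows "(\<Sum>i\<in>{- int L..N}. h (shift_down L X i)) = (\<Sum>i\<in>{- int L..N}. h (X i)) - h (X N)"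
  using sum_int_shift_window[OF assms(2), of "\<lambda>i. h (shift_down L X i)" "\<lambda>i. h (X i)"] assms(1)
  by (simp add: shift_down_def)

lemma Ag_shift_down:
  assumes "- int L \<le> j"
  shows "Ag w g (shift_down L X) (j+1) = Ag w g X j"
proof -
  have "(\<Sum>k\<in>{j+1..j+1+int w-1}. g (shift_down L X k)) = (\<Sum>k\<in>{j+1..(j+int w-1)+1}. g (shift_down L X k))"
    by (simp add: algebra_simps)
  also have "\<dots> = (\<Sum>k\<in>{j..j+int w-1}. g (shift_down L X (k+1)))" by (rule sum_int_shift1)
  also have "\<dots> = (\<Sum>k\<in>{j..j+int w-1}. g (X k))"
    using assms by (intro sum.cong) (auto simp: shift_down_def)
  finally show ?thesis by (simp add: Ag_def)
qed

lemma U_coupled_shift_down_diff: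
  assumes g0: "g 0 = 0" and G0: "G 0 = 0" and w: "w \<ge> 1"
  shows "U_coupled L w D g F G (shift_down L X) e - U_coupled L w D g F G X e
    = F (Ag w g X (int L)) e - F (Ag w g (shift_down L X) (- int L)) e
      - ((g (X (int L + int w - 1)) v* D) \<bullet> X (int L + int w - 1) - G (X (int L + int w - 1)))"
proof -
  let ?SX = "shift_down L X" and ?N = "int L + int w - 1"
  have aN: "- int L \<le> ?N" using w by simp
  have energy: "(\<Sum>i\<in>{- int L..?N}. (g (?SX i) v* D) \<bullet> ?SX i)
      = (\<Sum>i\<in>{- int L..?N}. (g (X i) v* D) \<bullet> X i) - (g (X ?N) v* D) \<bullet> X ?N"
    using sum_shift_down[OF _ aN, of "\<lambda>v. (g v v* D) \<bullet> v"] g0 by simp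
  have entropy: "(\<Sum>i\<in>{- int L..?N}. G (?SX i)) = (\<Sum>i\<in>{- int L..?N}. G (X i)) - G (X ?N)"
    using sum_shift_down[of G, OF G0 aN] .
  have coupling: "(\<Sum>j\<in>{- int L..int L}. F (Ag w g ?SX j) e)
      = F (Ag w g ?SX (- int L)) e + (\<Sum>j\<in>{- int L..int L}. F (Ag w g X j) e) - F (Ag w g X (int L)) e"
    by (rule sum_int_shift_window) (simp_all add: Ag_shift_down)
  show ?thesis unfolding U_coupled_def energy entropy coupling by simp
qed

theorem lemma8:
  fixes D :: "real^'d^'d" and f :: "real^'d \<Rightarrow> real \<Rightarrow> real^'d" and g :: "real^'d \<Rightarrow> real^'d"
    and F :: "real^'d \<Rightarrow> real \<Rightarrow> real" and G :: "real^'d \<Rightarrow> real"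
    and e :: real and w L :: nat and X :: "int \<Rightarrow> real^'d"
  assumes adm: "vector_admissible D f g F G"
    and e: "e \<in> Eset"
    and w: "w \<ge> 1"
    and L: "L \<ge> (w - 1) div 2"
    and XX: "\<forall>i\<in>{- int L .. int L + int w - 1}. X i \<in> Xset"
    and const: "\<forall>i\<in>{- int L .. int L + int w - 1}. i > int ((w - 1) div 2) \<longrightarrow> X i = X (int ((w - 1) div 2))"
  shows "U_coupled L w D g F G (shift_down L X) e - U_coupled L w D g F G X e
           \<le> - U_single D g F G (X (int ((w - 1) div 2))) e"
proof -
  define i0 where "i0 = int ((w - 1) div 2)"
  have g0: "g 0 = 0" and G0: "G 0 = 0" and gX: "\<forall>x\<in>Xset. g x \<in> Xset"
    using adm by (auto simp: vector_admissible_def)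
  have tail: "\<forall>k\<in>{int L..int L + int w - 1}. X k = X i0"
  proof
    fix k assume k: "k \<in> {int L..int L + int w - 1}"
    have "i0 \<le> k" using k L by (simp add: i0_def)
    thus "X k = X i0" using const k by (cases "k = i0") (auto simp: i0_def)
  qed
  hence last_row: "X (int L + int w - 1) = X i0" and last_window: "Ag w g X (int L) = g (X i0)"
    using w Ag_const_window[OF w tail] by auto
  have "Ag w g (shift_down L X) (- int L) \<in> Xset"
    using shift_down_in_Xset[OF XX] gX by (intro Ag_in_Xset[OF w]) auto
  hence "0 \<le> F (Ag w g (shift_down L X) (- int L)) e" by (rule F_nonneg[OF adm e])
  thus ?thesis
    using U_coupled_shift_down_diff[of g G w L D F X e, OF g0 G0 w]
    unfolding last_row last_window U_single_def i0_def[symmetric] by linarith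
qed

end
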